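(* Let $N>0$, $m>0$, $F>0$, $\alpha>0$, $w>0$ be fixed with $Nm>\alpha$, and for $g\geq 0$, $\tau\in(0,1)$, $L_g\geq 0$ define \[ L=\frac{N\left[(1-\tau)(mL_g+\alpha F)+(mg+F)mN\right]}{\alpha+(Nm-\alpha)\tau},\qquad q=\frac{(1-\tau)(L+L_g-\alpha g)}{\left(Nm+\alpha(1-\tau)\right)(L+L_g)}, \] \[ p=\frac{L+L_g}{L+L_g-\alpha g}\left(mw+\frac{\alpha(1-\tau)w}{N}\right),\qquad \Pi=\left((L+L_g)q+g\right)(p-mw)-Fw, \] regarded as functions of $(g,\tau,L_g)$. If $\alpha>1-\tau$, then \[ \frac{\partial \Pi}{\partial g}>\frac{\partial \Pi}{\partial L_g}. \]
   Context: These are the symmetric-equilibrium private employment $L$, per-capita consumption $q$ of each variety, price $p$, and profit $\Pi$ of each firm in a monopolistic-competition general equilibrium model with a measure $N$ of firms, marginal and fixed labor inputs $m$ and $F$, CARA utility parameter $\alpha$, nominal wage $w$, income tax rate $\tau$, government purchase $g$ of each variety, and government employment $L_g$. Partial derivatives are taken in $(g,\tau,L_g)$ with other parameters fixed. *)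

theory Defs
  imports "HOL-Analysis.Analysis"
begin

definition L_eq :: "real \<Rightarrow> real \<Rightarrow> real \<Rightarrow> real \<Rightarrow> real \<Rightarrow> real \<Rightarrow> real \<Rightarrow> real \<Rightarrow> real" where
  "L_eq N m F \<alpha> w g \<tau> Lg =
     N * ((1 - \<tau>) * (m * Lg + \<alpha> * F) + (m * g + F) * m * N) / (\<alpha> + (N * m - \<alpha>) * \<tau>)"

definition q_eq :: "real \<Rightarrow> real \<Rightarrow> real \<Rightarrow> real \<Rightarrow> real \<Rightarrow> real \<Rightarrow> real \<Rightarrow> real \<Rightarrow> real" where
  "q_eq N m F \<alpha> w g \<tau> Lg =
     (let L = L_eq N m F \<alpha> w g \<tau> Lg in
      (1 - \<tau>) * (L + Lg - \<alpha> * g) / ((N * m + \<alpha> * (1 - \<tau>)) * (L + Lg)))"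

definition p_eq :: "real \<Rightarrow> real \<Rightarrow> real \<Rightarrow> real \<Rightarrow> real \<Rightarrow> real \<Rightarrow> real \<Rightarrow> real \<Rightarrow> real" where
  "p_eq N m F \<alpha> w g \<tau> Lg =
     (let L = L_eq N m F \<alpha> w g \<tau> Lg in
      (L + Lg) / (L + Lg - \<alpha> * g) * (m * w + \<alpha> * (1 - \<tau>) * w / N))"

definition Pi_eq :: "real \<Rightarrow> real \<Rightarrow> real \<Rightarrow> real \<Rightarrow> real \<Rightarrow> real \<Rightarrow> real \<Rightarrow> real \<Rightarrow> real" where
  "Pi_eq N m F \<alpha> w g \<tau> Lg =
     ((L_eq N m F \<alpha> w g \<tau> Lg + Lg) * q_eq N m F \<alpha> w g \<tau> Lg + g)
       * (p_eq N m F \<alpha> w g \<tau> Lg - m * w) - F * w"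

end

theory Submission
  imports Defs
begin

text \<open>Profit depends on \<open>(g, L\<^sub>g)\<close> only through \<open>g\<close> and total labour \<open>S = L + L\<^sub>g\<close>, and
  \<open>S\<close> is affine in both variables: with \<open>D\<close> the denominator of \<open>L\<close> and
  \<open>c = N m + \<alpha> (1 - \<tau>)\<close>, its slope is \<open>a = (N m)\<^sup>2 / D\<close> in \<open>g\<close> and \<open>b = c / D\<close> in \<open>L\<^sub>g\<close>.
  By the chain rule both partial derivatives of profit are values of one linear form in the
  velocity of \<open>(S, g)\<close>, at \<open>(a, 1)\<close> and \<open>(b, 0)\<close> respectively. Their difference is
  \<open>w (R + (c / N) ((S\<^sup>2 - (a - b) \<alpha> g\<^sup>2) / (S - \<alpha> g)\<^sup>2 - 1))\<close>, where \<open>R > 0\<close> is the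
  difference at \<open>g = 0\<close>, and the second summand is nonnegative because \<open>S > a g\<close> and
  \<open>a > \<alpha>\<close>.\<close>

definition price_scale :: "real \<Rightarrow> real \<Rightarrow> real \<Rightarrow> real \<Rightarrow> real" where
  "price_scale N m \<alpha> \<tau> = N * m + \<alpha> * (1 - \<tau>)"

definition L_denom :: "real \<Rightarrow> real \<Rightarrow> real \<Rightarrow> real \<Rightarrow> real" where
  "L_denom N m \<alpha> \<tau> = \<alpha> + (N * m - \<alpha>) * \<tau>"

lemma price_scale_pos:
  assumes "0 < N" "0 < m" "0 \<le> \<alpha>" "\<tau> \<le> 1"
  shows "0 < price_scale N m \<alpha> \<tau>"
  using assms unfolding price_scale_def by (intro add_pos_nonneg) auto

lemma L_denom_convex_combination:
  "L_denom N m \<alpha> \<tau> = \<alpha> * (1 - \<tau>) + N * m * \<tau>"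
  by (simp add: L_denom_def algebra_simps)

lemma L_denom_pos:
  assumes "0 < \<alpha>" "\<alpha> < N * m" "0 \<le> \<tau>" "\<tau> \<le> 1"
  shows "0 < L_denom N m \<alpha> \<tau>"
  using assms unfolding L_denom_convex_combination
  by (cases "\<tau> = 1") (auto intro: add_pos_nonneg)

lemma L_denom_less:
  assumes "\<alpha> < N * m" "\<tau> < 1"
  shows "L_denom N m \<alpha> \<tau> < N * m"
proof -
  have "\<alpha> * (1 - \<tau>) < N * m * (1 - \<tau>)" using assms by (intro mult_strict_right_mono) auto
  then show ?thesis
    using assms unfolding L_denom_convex_combination by (simp add: algebra_simps)
qed

lemma alpha_less_L_eq_slope:
  assumes "0 < \<alpha>" "\<alpha> < N * m" "0 \<le> \<tau>" "\<tau> < 1"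
  shows "\<alpha> < (N * m)\<^sup>2 / L_denom N m \<alpha> \<tau>"
proof -
  have D: "0 < L_denom N m \<alpha> \<tau>" "L_denom N m \<alpha> \<tau> < N * m"
    using assms by (simp_all add: L_denom_pos L_denom_less)
  then have "L_denom N m \<alpha> \<tau> * \<alpha> < N * m * (N * m)" using assms by (intro mult_strict_mono) auto
  then show ?thesis using D by (simp add: power2_eq_square field_simps)
qed

definition Pi_of_labour :: "real \<Rightarrow> real \<Rightarrow> real \<Rightarrow> real \<Rightarrow> real \<Rightarrow> real \<Rightarrow> real \<Rightarrow> real \<Rightarrow> real" where
  "Pi_of_labour N m F \<alpha> w \<tau> S g =
     w * ((1 - \<tau>) * S / N - (1 - \<tau>) * m * (S - \<alpha> * g) / price_scale N m \<alpha> \<tau>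
          + price_scale N m \<alpha> \<tau> * g * S / (N * (S - \<alpha> * g)) - g * m - F)"

definition Pi_slope :: "real \<Rightarrow> real \<Rightarrow> real \<Rightarrow> real \<Rightarrow> real \<Rightarrow> real \<Rightarrow> real \<Rightarrow> real \<Rightarrow> real \<Rightarrow> real" where
  "Pi_slope N m \<alpha> w \<tau> S g s k =
     w * ((1 - \<tau>) * s / N - (1 - \<tau>) * m * (s - \<alpha> * k) / price_scale N m \<alpha> \<tau>
          + price_scale N m \<alpha> \<tau> * (k * S\<^sup>2 - s * \<alpha> * g\<^sup>2) / (N * (S - \<alpha> * g)\<^sup>2) - k * m)"

lemma Pi_eq_eq_Pi_of_labour:
  assumes "N \<noteq> 0" "price_scale N m \<alpha> \<tau> \<noteq> 0"
    and "L_eq N m F \<alpha> w g \<tau> Lg + Lg \<noteq> 0" "L_eq N m F \<alpha> w g \<tau> Lg + Lg - \<alpha> * g \<noteq> 0"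
  shows "Pi_eq N m F \<alpha> w g \<tau> Lg = Pi_of_labour N m F \<alpha> w \<tau> (L_eq N m F \<alpha> w g \<tau> Lg + Lg) g"
proof -
  obtain S where S: "L_eq N m F \<alpha> w g \<tau> Lg + Lg = S" by simp
  then have "L_eq N m F \<alpha> w g \<tau> Lg = S - Lg" by simp
  with S assms show ?thesis
    unfolding Pi_eq_def q_eq_def p_eq_def Pi_of_labour_def price_scale_def Let_def
    by (simp add: divide_simps) (simp add: algebra_simps)
qed

lemma Pi_of_labour_has_derivative:
  assumes "(S has_real_derivative s) (at x)" "(G has_real_derivative k) (at x)"
    and "N \<noteq> 0" "price_scale N m \<alpha> \<tau> \<noteq> 0" "S x - \<alpha> * G x \<noteq> 0"
  shows "((\<lambda>y. Pi_of_labour N m F \<alpha> w \<tau> (S y) (G y)) has_real_derivative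
           Pi_slope N m \<alpha> w \<tau> (S x) (G x) s k) (at x)"
  using assms unfolding Pi_of_labour_def Pi_slope_def
  by (auto intro!: derivative_eq_intros) (simp add: divide_simps power2_eq_square; algebra)

lemma L_eq_plus_Lg_has_derivative:
  assumes "(g has_real_derivative k) (at x)" "(Lg has_real_derivative l) (at x)"
    and "L_denom N m \<alpha> \<tau> \<noteq> 0"
  shows "((\<lambda>y. L_eq N m F \<alpha> w (g y) \<tau> (Lg y) + Lg y) has_real_derivative
           ((N * m)\<^sup>2 * k + price_scale N m \<alpha> \<tau> * l) / L_denom N m \<alpha> \<tau>) (at x)"
  using assms unfolding L_eq_def L_denom_def
  by (auto intro!: derivative_eq_intros) (simp add: price_scale_def field_simps power2_eq_square)

lemma Pi_eq_has_derivative_along: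
  assumes g: "(g has_real_derivative k) (at x)" and Lg: "(Lg has_real_derivative l) (at x)"
    and N: "N \<noteq> 0" and c: "price_scale N m \<alpha> \<tau> \<noteq> 0" and D: "L_denom N m \<alpha> \<tau> \<noteq> 0"
    and S: "L_eq N m F \<alpha> w (g x) \<tau> (Lg x) + Lg x \<noteq> 0"
    and u: "L_eq N m F \<alpha> w (g x) \<tau> (Lg x) + Lg x - \<alpha> * g x \<noteq> 0"
  shows "((\<lambda>y. Pi_eq N m F \<alpha> w (g y) \<tau> (Lg y)) has_real_derivative
           Pi_slope N m \<alpha> w \<tau> (L_eq N m F \<alpha> w (g x) \<tau> (Lg x) + Lg x) (g x)
             (((N * m)\<^sup>2 * k + price_scale N m \<alpha> \<tau> * l) / L_denom N m \<alpha> \<tau>) k) (at x)"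
proof -
  let ?S = "\<lambda>y. L_eq N m F \<alpha> w (g y) \<tau> (Lg y) + Lg y"
  have dS: "(?S has_real_derivative ((N * m)\<^sup>2 * k + price_scale N m \<alpha> \<tau> * l) / L_denom N m \<alpha> \<tau>) (at x)"
    using g Lg D by (rule L_eq_plus_Lg_has_derivative)
  have "isCont ?S x" "isCont (\<lambda>y. ?S y - \<alpha> * g y) x"
    using DERIV_isCont[OF dS] DERIV_isCont[OF g] by (auto intro!: continuous_intros)
  then have "(?S \<longlongrightarrow> ?S x) (nhds x)" "((\<lambda>y. ?S y - \<alpha> * g y) \<longlongrightarrow> ?S x - \<alpha> * g x) (nhds x)"
    by (auto simp: isCont_def intro!: tendsto_at_iff_tendsto_nhds[THEN iffD1])
  then have "\<forall>\<^sub>F y in nhds x. ?S y \<noteq> 0 \<and> ?S y - \<alpha> * g y \<noteq> 0"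
    using S u by (intro eventually_conj tendsto_imp_eventually_ne)
  then have "\<forall>\<^sub>F y in nhds x.
      Pi_eq N m F \<alpha> w (g y) \<tau> (Lg y) = Pi_of_labour N m F \<alpha> w \<tau> (?S y) (g y)"
    by eventually_elim (use N c in \<open>auto intro: Pi_eq_eq_Pi_of_labour\<close>)
  moreover have "((\<lambda>y. Pi_of_labour N m F \<alpha> w \<tau> (?S y) (g y)) has_real_derivative
           Pi_slope N m \<alpha> w \<tau> (?S x) (g x)
             (((N * m)\<^sup>2 * k + price_scale N m \<alpha> \<tau> * l) / L_denom N m \<alpha> \<tau>) k) (at x)"
    using dS g N c u by (rule Pi_of_labour_has_derivative)
  ultimately show ?thesis
    by (subst DERIV_cong_ev) auto
qed

lemma L_eq_plus_Lg_gt: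
  assumes "N > 0" "m > 0" "F > 0" "\<alpha> > 0" "\<tau> < 1" "Lg \<ge> 0" "L_denom N m \<alpha> \<tau> > 0"
  shows "L_eq N m F \<alpha> w g \<tau> Lg + Lg > (N * m)\<^sup>2 / L_denom N m \<alpha> \<tau> * g"
proof -
  have "L_eq N m F \<alpha> w g \<tau> Lg - (N * m)\<^sup>2 / L_denom N m \<alpha> \<tau> * g
      = N * ((1 - \<tau>) * (m * Lg + \<alpha> * F) + F * m * N) / L_denom N m \<alpha> \<tau>"
    using assms unfolding L_eq_def L_denom_def[symmetric] by (simp add: field_simps power2_eq_square)
  also have "\<dots> > 0"
    using assms by (intro divide_pos_pos mult_pos_pos add_nonneg_pos mult_nonneg_nonneg) auto
  finally show ?thesis using assms by simp
qed

text \<open>This is the gap between the two slopes at \<open>g = 0\<close>; the hypothesis \<open>\<alpha> > 1 - \<tau>\<close> is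
  used only here, to get \<open>L_denom N m \<alpha> \<tau> > 1 - \<tau>\<close>.\<close>

lemma slope_gap_const_pos:
  fixes N m \<alpha> \<tau> :: real
  assumes "N > 0" "m > 0" "\<alpha> > 0" "N * m > \<alpha>" "0 < \<tau>" "\<tau> < 1" "\<alpha> > 1 - \<tau>"
  defines "c \<equiv> price_scale N m \<alpha> \<tau>" and "D \<equiv> L_denom N m \<alpha> \<tau>"
  defines "a \<equiv> (N * m)\<^sup>2 / D" and "b \<equiv> c / D"
  shows "0 < (1 - \<tau>) * (a - b) / N - (1 - \<tau>) * m * (a - b - \<alpha>) / c + c / N - m"
proof -
  define t where "t = 1 - \<tau>"
  have t: "0 < t" "t < \<alpha>" "t < N * m" using assms by (auto simp: t_def)
  have c: "c > 0" using assms by (simp add: c_def price_scale_pos)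
  have D: "D > 0" using assms by (simp add: D_def L_denom_pos)
  have "t * t < \<alpha> * t" "t * \<tau> < N * m * \<tau>" using t assms by simp_all
  then have "t < D"
    unfolding D_def L_denom_convex_combination t_def[symmetric] by (simp add: t_def algebra_simps)
  then have "0 < 1 - t / D" using D by simp
  then have "0 < (\<alpha> * t / N) * (1 - t / D)" using assms t by simp
  moreover have "0 < \<alpha> * t * t * a / (N * c)" "0 < t * m * \<alpha> / c"
    using assms t c D by (simp_all add: a_def)
  moreover have "(1 - \<tau>) * (a - b) / N - (1 - \<tau>) * m * (a - b - \<alpha>) / c + c / N - m
      = (\<alpha> * t / N) * (1 - t / D) + \<alpha> * t * t * a / (N * c) + t * m * \<alpha> / c"
    using assms c D unfolding b_def t_def
    by (simp add: field_simps) (simp add: c_def price_scale_def algebra_simps)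
  ultimately show ?thesis by linarith
qed

lemma Pi_slope_gap_pos:
  fixes N m \<alpha> w \<tau> S g :: real
  assumes "N > 0" "m > 0" "\<alpha> > 0" "w > 0" "N * m > \<alpha>" "0 < \<tau>" "\<tau> < 1" "\<alpha> > 1 - \<tau>"
    and "g \<ge> 0" "S > (N * m)\<^sup>2 / L_denom N m \<alpha> \<tau> * g"
  shows "Pi_slope N m \<alpha> w \<tau> S g (price_scale N m \<alpha> \<tau> / L_denom N m \<alpha> \<tau>) 0
       < Pi_slope N m \<alpha> w \<tau> S g ((N * m)\<^sup>2 / L_denom N m \<alpha> \<tau>) 1"
proof -
  define c where "c = price_scale N m \<alpha> \<tau>"
  define D where "D = L_denom N m \<alpha> \<tau>"
  define a where "a = (N * m)\<^sup>2 / D"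
  define b where "b = c / D"
  define R where "R = (1 - \<tau>) * (a - b) / N - (1 - \<tau>) * m * (a - b - \<alpha>) / c + c / N - m"
  have c: "c > 0" using assms by (simp add: c_def price_scale_pos)
  have D: "0 < D" using assms by (simp add: D_def L_denom_pos)
  have "\<alpha> < a" using assms by (simp add: a_def D_def alpha_less_L_eq_slope)
  have "b > 0" using c D by (simp add: b_def)
  have R: "R > 0" using slope_gap_const_pos[OF assms(1-3,5-8)] by (simp add: R_def a_def b_def c_def D_def)
  define u where "u = S - \<alpha> * g"
  have "S > a * g" using assms by (simp add: a_def D_def)
  moreover have "(a - \<alpha>) * g \<ge> 0" using \<open>\<alpha> < a\<close> assms by simp
  ultimately have "u > 0" by (simp add: u_def algebra_simps)
  have "(a - \<alpha>) * g + b * g \<ge> 0" using \<open>\<alpha> < a\<close> \<open>b > 0\<close> assms by simp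
  then have "2 * S - \<alpha> * g - a * g + b * g \<ge> 0"
    using \<open>S > a * g\<close> by (simp add: algebra_simps)
  have "S\<^sup>2 - (a - b) * \<alpha> * g\<^sup>2 - u\<^sup>2 = \<alpha> * g * (2 * S - \<alpha> * g - a * g + b * g)"
    by (simp add: u_def power2_eq_square algebra_simps)
  moreover have "\<alpha> * g * (2 * S - \<alpha> * g - a * g + b * g) \<ge> 0"
    using \<open>2 * S - \<alpha> * g - a * g + b * g \<ge> 0\<close> assms by simp
  ultimately have "u\<^sup>2 \<le> S\<^sup>2 - (a - b) * \<alpha> * g\<^sup>2" by simp
  then have "1 \<le> (S\<^sup>2 - (a - b) * \<alpha> * g\<^sup>2) / u\<^sup>2" using \<open>u > 0\<close> by simp
  then have "0 < w * (R + c / N * ((S\<^sup>2 - (a - b) * \<alpha> * g\<^sup>2) / u\<^sup>2 - 1))"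
    using R c assms by (intro mult_pos_pos add_pos_nonneg mult_nonneg_nonneg) auto
  moreover have "Pi_slope N m \<alpha> w \<tau> S g a 1 - Pi_slope N m \<alpha> w \<tau> S g b 0
      = w * (R + c / N * ((S\<^sup>2 - (a - b) * \<alpha> * g\<^sup>2) / u\<^sup>2 - 1))"
    unfolding Pi_slope_def R_def c_def[symmetric] u_def[symmetric]
    using \<open>u > 0\<close> c assms by (simp add: field_simps)
  ultimately show ?thesis by (simp add: a_def b_def c_def D_def)
qed

theorem theorem6:
  fixes N m F \<alpha> w g \<tau> Lg :: real
  assumes "N > 0" "m > 0" "F > 0" "\<alpha> > 0" "w > 0" "N * m > \<alpha>"
    and "g \<ge> 0" "0 < \<tau>" "\<tau> < 1" "Lg \<ge> 0"
    and "\<alpha> > 1 - \<tau>"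
  shows "\<exists>dg dL.
           ((\<lambda>x. Pi_eq N m F \<alpha> w x \<tau> Lg) has_real_derivative dg) (at g) \<and>
           ((\<lambda>x. Pi_eq N m F \<alpha> w g \<tau> x) has_real_derivative dL) (at Lg) \<and>
           dg > dL"
proof -
  let ?S = "L_eq N m F \<alpha> w g \<tau> Lg + Lg"
  have c: "price_scale N m \<alpha> \<tau> > 0" using assms by (simp add: price_scale_pos)
  have D: "L_denom N m \<alpha> \<tau> > 0" using assms by (simp add: L_denom_pos)
  have S: "?S > (N * m)\<^sup>2 / L_denom N m \<alpha> \<tau> * g"
    using assms D by (intro L_eq_plus_Lg_gt) auto
  moreover have "(N * m)\<^sup>2 / L_denom N m \<alpha> \<tau> * g \<ge> \<alpha> * g"
    using assms alpha_less_L_eq_slope[of \<alpha> N m \<tau>] by (intro mult_right_mono) auto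
  moreover have "\<alpha> * g \<ge> 0" using assms by simp
  ultimately have "?S - \<alpha> * g > 0" "?S > 0" by linarith+
  then have "((\<lambda>x. Pi_eq N m F \<alpha> w x \<tau> Lg) has_real_derivative
      Pi_slope N m \<alpha> w \<tau> ?S g ((N * m)\<^sup>2 / L_denom N m \<alpha> \<tau>) 1) (at g)"
    and "((\<lambda>x. Pi_eq N m F \<alpha> w g \<tau> x) has_real_derivative
      Pi_slope N m \<alpha> w \<tau> ?S g (price_scale N m \<alpha> \<tau> / L_denom N m \<alpha> \<tau>) 0) (at Lg)"
    using Pi_eq_has_derivative_along[where g="\<lambda>x. x" and Lg="\<lambda>_. Lg", OF DERIV_ident DERIV_const]
      Pi_eq_has_derivative_along[where g="\<lambda>_. g" and Lg="\<lambda>x. x", OF DERIV_const DERIV_ident]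
      assms c D by auto
  moreover have "Pi_slope N m \<alpha> w \<tau> ?S g (price_scale N m \<alpha> \<tau> / L_denom N m \<alpha> \<tau>) 0
      < Pi_slope N m \<alpha> w \<tau> ?S g ((N * m)\<^sup>2 / L_denom N m \<alpha> \<tau>) 1"
    using assms S by (intro Pi_slope_gap_pos) auto
  ultimately show ?thesis by blast
qed

end
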